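(* Let $1>\delta_1>\delta_2>0$. Consider the S6V model with any boundary data having no arrow incoming from $(1,0)$, and let $Q$ be the second class particle starting from $(1,0)$. Let $x>10$ be an integer and let $y_Q$ be the height at which $Q$ crosses the line $\{(i,j):i=x+\frac12\}$. Then there are constants $C,c>0$ such that for all $k\ge100x\delta_1$, $$\mathbb{P}[y_Q\le x-k]\le C\mathrm{e}^{-ck}.$$
   Context: S6V model: vertices $(i,j)\in\mathbb{Z}_{>0}^2$ with incoming edges from left and below, outgoing to right and up; boundary data specify which edges $(0,j)\to(1,j)$ and $(i,0)\to(i,1)$ carry an arrow (incoming from $(0,j)$, resp. $(i,0)$). Vertices sampled on antidiagonals: none in gives none out; two in gives both out; a single arrow from below exits up w.p. $\delta_1$, right w.p. $1-\delta_1$; a single arrow from the left exits right w.p. $\delta_2$, up w.p. $1-\delta_2$. Second class particle from $v_0$: with $\xi_0^+$ equal to the boundary data plus an arrow from $v_0$, run both models with shared Bernoulli decisions at each vertex (basic coupling); edges present in the $\xi_0^+$ model but not in the original model form one up-right path from $v_0$. *)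

theory Defs
  imports "HOL-Probability.Probability"
begin

text \<open>Stochastic six-vertex (S6V) model on vertices (i,j) with i,j >= 1.
  Boundary data: L j = arrow on edge (0,j)->(1,j); B i = arrow on edge (i,0)->(i,1).
  Randomness: at each vertex v an independent pair of coins
  (c1, c2), c1 ~ Bernoulli(d1), c2 ~ Bernoulli(d2).
  c1 decides a single arrow from below (True = exits up),
  c2 decides a single arrow from the left (True = exits right).
  Output of a vertex is the pair (right edge occupied, up edge occupied).\<close>

definition vertex_rule :: "bool \<Rightarrow> bool \<Rightarrow> bool \<times> bool \<Rightarrow> bool \<times> bool" where
  "vertex_rule l b c =
     (if l \<and> b then (True, True)
      else if \<not> l \<and> \<not> b then (False, False)
      else if b then (\<not> fst c, fst c)
      else (snd c, \<not> snd c))"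

function s6v_out :: "(nat \<Rightarrow> bool) \<Rightarrow> (nat \<Rightarrow> bool) \<Rightarrow> (nat \<times> nat \<Rightarrow> bool \<times> bool)
    \<Rightarrow> nat \<Rightarrow> nat \<Rightarrow> bool \<times> bool" where
  "s6v_out L B \<omega> i j =
     vertex_rule
       (if i \<le> 1 then L j else fst (s6v_out L B \<omega> (i - 1) j))
       (if j \<le> 1 then B i else snd (s6v_out L B \<omega> i (j - 1)))
       (\<omega> (i, j))"
  by pat_completeness auto
termination
  by (relation "Wellfounded.measure (\<lambda>(L, B, \<omega>, i, j). i + j)") auto

definition s6v_space :: "real \<Rightarrow> real \<Rightarrow> (nat \<times> nat \<Rightarrow> bool \<times> bool) measure" where
  "s6v_space d1 d2 =
     PiM UNIV (\<lambda>_. measure_pmf (pair_pmf (bernoulli_pmf d1) (bernoulli_pmf d2)))"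

text \<open>Second class particle from v0 = (1,0): compare the model with boundary B and with
  boundary B(1 := True) under basic coupling. The horizontal edge (x,j)->(x+1,j) belongs
  to the path of the second class particle iff it is occupied in the plus model but not
  in the original model.\<close>
definition sc_right_edge :: "(nat \<Rightarrow> bool) \<Rightarrow> (nat \<Rightarrow> bool) \<Rightarrow> (nat \<times> nat \<Rightarrow> bool \<times> bool)
    \<Rightarrow> nat \<Rightarrow> nat \<Rightarrow> bool" where
  "sc_right_edge L B \<omega> x j \<longleftrightarrow>
     1 \<le> j \<and> fst (s6v_out L (B(1 := True)) \<omega> x j) \<and> \<not> fst (s6v_out L B \<omega> x j)"

end

theory Submission
  imports Defs
begin

(* Under the basic coupling the two models differ along a single up-right path from (1,1): on
   every antidiagonal exactly one vertex receives a discrepancy, and the second class particle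
   is the path of these vertices.  To leave column x through the edge at height j it makes x
   right steps but only j - 1 up steps, so for j <= x - k at least k of its first 2x steps are
   straight right steps.  A discrepancy entering from the left can only continue to the right
   if one of the two coins of that vertex shows True, which has probability at most
   d1 + d2 <= 2 d1.  The position of the particle at time t depends only on the coins of
   earlier antidiagonals, so the coins it reads are i.i.d.; hence the number of such coins
   among its first 2x steps has exponential moment at most (1 + 2 (e - 1) d1)^(2x) <= e^(k/2),
   and Markov's inequality gives the bound with C = 1 and c = 1/2. *)

section \<open>Discrepancies under the basic coupling\<close>

definition coin_active :: "bool \<times> bool \<Rightarrow> bool" where
  "coin_active c \<longleftrightarrow> fst c \<or> snd c"

lemma vertex_rule_mono:
  assumes "l \<longrightarrow> l'" and "b \<longrightarrow> b'"
  shows "(fst (vertex_rule l b c) \<longrightarrow> fst (vertex_rule l' b' c)) \<and>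
         (snd (vertex_rule l b c) \<longrightarrow> snd (vertex_rule l' b' c))"
  using assms by (cases c) (auto simp: vertex_rule_def)

lemma vertex_rule_discrepancy_conservation:
  assumes "l \<longrightarrow> l'" and "b \<longrightarrow> b'"
  shows "of_bool (fst (vertex_rule l' b' c) \<and> \<not> fst (vertex_rule l b c)) +
         of_bool (snd (vertex_rule l' b' c) \<and> \<not> snd (vertex_rule l b c))
       = (of_bool (l' \<and> \<not> l) + of_bool (b' \<and> \<not> b) :: nat)"
  using assms by (cases l; cases b; cases l'; cases b'; cases c) (auto simp: vertex_rule_def)

lemma vertex_rule_left_discrepancy_exits_right:
  assumes "l' \<and> \<not> l" and "fst (vertex_rule l' b c) \<and> \<not> fst (vertex_rule l b c)"
  shows "coin_active c"
  using assms by (cases b; cases c) (auto simp: vertex_rule_def coin_active_def)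

definition s6v_in_left :: "(nat \<Rightarrow> bool) \<Rightarrow> (nat \<Rightarrow> bool) \<Rightarrow> (nat \<times> nat \<Rightarrow> bool \<times> bool)
    \<Rightarrow> nat \<Rightarrow> nat \<Rightarrow> bool" where
  "s6v_in_left L B \<omega> i j = (if i \<le> 1 then L j else fst (s6v_out L B \<omega> (i - 1) j))"

definition s6v_in_below :: "(nat \<Rightarrow> bool) \<Rightarrow> (nat \<Rightarrow> bool) \<Rightarrow> (nat \<times> nat \<Rightarrow> bool \<times> bool)
    \<Rightarrow> nat \<Rightarrow> nat \<Rightarrow> bool" where
  "s6v_in_below L B \<omega> i j = (if j \<le> 1 then B i else snd (s6v_out L B \<omega> i (j - 1)))"

lemma s6v_out_unfold:
  "s6v_out L B \<omega> i j = vertex_rule (s6v_in_left L B \<omega> i j) (s6v_in_below L B \<omega> i j) (\<omega> (i, j))"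
  by (subst s6v_out.simps) (simp add: s6v_in_left_def s6v_in_below_def)

declare s6v_out.simps [simp del]

lemma s6v_out_mono:
  assumes "\<And>j. L j \<Longrightarrow> L' j" and "\<And>i. B i \<Longrightarrow> B' i"
  shows "(fst (s6v_out L B \<omega> i j) \<longrightarrow> fst (s6v_out L' B' \<omega> i j)) \<and>
         (snd (s6v_out L B \<omega> i j) \<longrightarrow> snd (s6v_out L' B' \<omega> i j))"
proof (induction "i + j" arbitrary: i j rule: less_induct)
  case less
  have "s6v_in_left L B \<omega> i j \<longrightarrow> s6v_in_left L' B' \<omega> i j"
    using assms less[of "i - 1" j] by (auto simp: s6v_in_left_def)
  moreover have "s6v_in_below L B \<omega> i j \<longrightarrow> s6v_in_below L' B' \<omega> i j"
    using assms less[of i "j - 1"] by (auto simp: s6v_in_below_def)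
  ultimately show ?case
    unfolding s6v_out_unfold[of L] s6v_out_unfold[of L'] by (rule vertex_rule_mono)
qed

lemma s6v_out_local:
  assumes "\<And>a b. a \<le> i \<Longrightarrow> b \<le> j \<Longrightarrow> \<omega> (a, b) = \<omega>' (a, b)"
  shows "s6v_out L B \<omega> i j = s6v_out L B \<omega>' i j"
  using assms
proof (induction "i + j" arbitrary: i j rule: less_induct)
  case less
  have "s6v_in_left L B \<omega> i j = s6v_in_left L B \<omega>' i j"
    using less(1)[of "i - 1" j] less(2) by (simp add: s6v_in_left_def)
  moreover have "s6v_in_below L B \<omega> i j = s6v_in_below L B \<omega>' i j"
    using less(1)[of i "j - 1"] less(2) by (simp add: s6v_in_below_def)
  ultimately show ?case
    using less(2)[of i j] by (simp add: s6v_out_unfold[of L B \<omega>] s6v_out_unfold[of L B \<omega>'])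
qed

definition disc_out_right :: "(nat \<Rightarrow> bool) \<Rightarrow> (nat \<Rightarrow> bool) \<Rightarrow> (nat \<times> nat \<Rightarrow> bool \<times> bool)
    \<Rightarrow> nat \<Rightarrow> nat \<Rightarrow> bool" where
  "disc_out_right L B \<omega> i j \<longleftrightarrow>
     fst (s6v_out L (B(1 := True)) \<omega> i j) \<and> \<not> fst (s6v_out L B \<omega> i j)"

definition disc_out_up :: "(nat \<Rightarrow> bool) \<Rightarrow> (nat \<Rightarrow> bool) \<Rightarrow> (nat \<times> nat \<Rightarrow> bool \<times> bool)
    \<Rightarrow> nat \<Rightarrow> nat \<Rightarrow> bool" where
  "disc_out_up L B \<omega> i j \<longleftrightarrow>
     snd (s6v_out L (B(1 := True)) \<omega> i j) \<and> \<not> snd (s6v_out L B \<omega> i j)"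

definition disc_in_left :: "(nat \<Rightarrow> bool) \<Rightarrow> (nat \<Rightarrow> bool) \<Rightarrow> (nat \<times> nat \<Rightarrow> bool \<times> bool)
    \<Rightarrow> nat \<Rightarrow> nat \<Rightarrow> bool" where
  "disc_in_left L B \<omega> i j \<longleftrightarrow> s6v_in_left L (B(1 := True)) \<omega> i j \<and> \<not> s6v_in_left L B \<omega> i j"

definition disc_in_below :: "(nat \<Rightarrow> bool) \<Rightarrow> (nat \<Rightarrow> bool) \<Rightarrow> (nat \<times> nat \<Rightarrow> bool \<times> bool)
    \<Rightarrow> nat \<Rightarrow> nat \<Rightarrow> bool" where
  "disc_in_below L B \<omega> i j \<longleftrightarrow> s6v_in_below L (B(1 := True)) \<omega> i j \<and> \<not> s6v_in_below L B \<omega> i j"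

lemma s6v_in_mono_update:
  "s6v_in_left L B \<omega> i j \<longrightarrow> s6v_in_left L (B(1 := True)) \<omega> i j"
  "s6v_in_below L B \<omega> i j \<longrightarrow> s6v_in_below L (B(1 := True)) \<omega> i j"
  using s6v_out_mono[of L L B "B(1 := True)" \<omega>]
  by (auto simp: s6v_in_left_def s6v_in_below_def)

lemma disc_conservation:
  "of_bool (disc_out_right L B \<omega> i j) + of_bool (disc_out_up L B \<omega> i j)
     = (of_bool (disc_in_left L B \<omega> i j) + of_bool (disc_in_below L B \<omega> i j) :: nat)"
  unfolding disc_out_right_def disc_out_up_def disc_in_left_def disc_in_below_def
    s6v_out_unfold[of L B] s6v_out_unfold[of L "B(1 := True)"]
  by (rule vertex_rule_discrepancy_conservation[OF s6v_in_mono_update])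

lemma disc_in_left_iff: "disc_in_left L B \<omega> i j \<longleftrightarrow> 2 \<le> i \<and> disc_out_right L B \<omega> (i - 1) j"
  by (auto simp: disc_in_left_def disc_out_right_def s6v_in_left_def)

lemma disc_in_below_iff:
  assumes "\<not> B 1"
  shows "disc_in_below L B \<omega> i j \<longleftrightarrow> (if j \<le> 1 then i = 1 else disc_out_up L B \<omega> i (j - 1))"
  using assms by (auto simp: disc_in_below_def disc_out_up_def s6v_in_below_def)

lemma disc_straight_right_coin_active:
  assumes "disc_in_left L B \<omega> i j" and "\<not> disc_in_below L B \<omega> i j" and "disc_out_right L B \<omega> i j"
  shows "coin_active (\<omega> (i, j))"
proof -
  have "s6v_in_below L (B(1 := True)) \<omega> i j = s6v_in_below L B \<omega> i j"
    using assms(2) s6v_in_mono_update(2) by (auto simp: disc_in_below_def)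
  then show ?thesis
    using assms(1,3) vertex_rule_left_discrepancy_exits_right
    unfolding disc_in_left_def disc_out_right_def
      s6v_out_unfold[of L B] s6v_out_unfold[of L "B(1 := True)"]
    by metis
qed

section \<open>The path of the second class particle\<close>

primrec sc_pos :: "(nat \<Rightarrow> bool) \<Rightarrow> (nat \<Rightarrow> bool) \<Rightarrow> (nat \<times> nat \<Rightarrow> bool \<times> bool) \<Rightarrow> nat \<Rightarrow> nat \<times> nat" where
  "sc_pos L B \<omega> 0 = (1, 1)"
| "sc_pos L B \<omega> (Suc t) =
     (let (i, j) = sc_pos L B \<omega> t in if disc_out_right L B \<omega> i j then (i + 1, j) else (i, j + 1))"

definition sc_moves_right :: "(nat \<Rightarrow> bool) \<Rightarrow> (nat \<Rightarrow> bool) \<Rightarrow> (nat \<times> nat \<Rightarrow> bool \<times> bool) \<Rightarrow> nat \<Rightarrow> bool" where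
  "sc_moves_right L B \<omega> t = (case sc_pos L B \<omega> t of (i, j) \<Rightarrow> disc_out_right L B \<omega> i j)"

lemma sc_pos_Suc:
  "sc_pos L B \<omega> (Suc t) = (case sc_pos L B \<omega> t of (i, j) \<Rightarrow>
     if sc_moves_right L B \<omega> t then (i + 1, j) else (i, j + 1))"
  by (simp add: sc_moves_right_def split: prod.split)

declare sc_pos.simps(2) [simp del]

lemma sc_pos_antidiagonal:
  "sc_pos L B \<omega> t = (i, j) \<Longrightarrow> i + j = t + 2 \<and> 1 \<le> i \<and> 1 \<le> j"
  by (induction t arbitrary: i j) (auto simp: sc_pos_Suc split: prod.splits if_splits)

lemma disc_out_iff_of_disc_in:
  assumes "of_bool (disc_in_left L B \<omega> i j) + of_bool (disc_in_below L B \<omega> i j)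
             = (of_bool ((i, j) = sc_pos L B \<omega> t) :: nat)"
  shows "disc_out_right L B \<omega> i j \<longleftrightarrow> (i, j) = sc_pos L B \<omega> t \<and> sc_moves_right L B \<omega> t"
    and "disc_out_up L B \<omega> i j \<longleftrightarrow> (i, j) = sc_pos L B \<omega> t \<and> \<not> sc_moves_right L B \<omega> t"
proof -
  have sum: "of_bool (disc_out_right L B \<omega> i j) + of_bool (disc_out_up L B \<omega> i j)
      = (of_bool ((i, j) = sc_pos L B \<omega> t) :: nat)"
    using disc_conservation[of L B \<omega> i j] assms by simp
  have "sc_moves_right L B \<omega> t \<longleftrightarrow> disc_out_right L B \<omega> i j" if "(i, j) = sc_pos L B \<omega> t"
    using that by (simp add: sc_moves_right_def flip: that)
  then show "disc_out_right L B \<omega> i j \<longleftrightarrow> (i, j) = sc_pos L B \<omega> t \<and> sc_moves_right L B \<omega> t"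
    and "disc_out_up L B \<omega> i j \<longleftrightarrow> (i, j) = sc_pos L B \<omega> t \<and> \<not> sc_moves_right L B \<omega> t"
    using sum by (auto simp: of_bool_def split: if_splits)
qed

lemma disc_in_antidiagonal:
  assumes "\<not> B 1" and "1 \<le> i" and "1 \<le> j" and "i + j = t + 2"
  shows "of_bool (disc_in_left L B \<omega> i j) + of_bool (disc_in_below L B \<omega> i j)
           = (of_bool ((i, j) = sc_pos L B \<omega> t) :: nat)"
  using assms(2-)
proof (induction t arbitrary: i j)
  case 0
  then show ?case using assms(1) by (simp add: disc_in_left_iff disc_in_below_iff)
next
  case (Suc t)
  obtain p q where pos: "sc_pos L B \<omega> t = (p, q)" by (cases "sc_pos L B \<omega> t")
  note pq = sc_pos_antidiagonal[OF pos]
  note out = disc_out_iff_of_disc_in[OF Suc.IH]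
  have "disc_in_left L B \<omega> i j \<longleftrightarrow> i = p + 1 \<and> j = q \<and> sc_moves_right L B \<omega> t"
    using Suc.prems out(1)[of "i - 1" j] pos pq by (auto simp: disc_in_left_iff)
  moreover have "disc_in_below L B \<omega> i j \<longleftrightarrow> i = p \<and> j = q + 1 \<and> \<not> sc_moves_right L B \<omega> t"
    using Suc.prems out(2)[of i "j - 1"] assms(1) pos pq by (auto simp: disc_in_below_iff)
  ultimately show ?case
    using Suc.prems pq by (auto simp: sc_pos_Suc pos)
qed

lemma disc_out_right_antidiagonal:
  assumes "\<not> B 1" and "1 \<le> i" and "1 \<le> j" and "i + j = t + 2"
  shows "disc_out_right L B \<omega> i j \<longleftrightarrow> (i, j) = sc_pos L B \<omega> t \<and> sc_moves_right L B \<omega> t"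
  using assms by (intro disc_out_iff_of_disc_in(1) disc_in_antidiagonal)

lemma sc_right_edge_iff_disc_out_right:
  "sc_right_edge L B \<omega> x j \<longleftrightarrow> 1 \<le> j \<and> disc_out_right L B \<omega> x j"
  by (simp add: sc_right_edge_def disc_out_right_def)

lemma sc_right_edge_iff_sc_pos:
  assumes "\<not> B 1" and "1 \<le> x"
  shows "sc_right_edge L B \<omega> x j \<longleftrightarrow>
    1 \<le> j \<and> sc_pos L B \<omega> (x + j - 2) = (x, j) \<and> sc_moves_right L B \<omega> (x + j - 2)"
proof (cases "1 \<le> j")
  case True
  have "disc_out_right L B \<omega> x j \<longleftrightarrow>
      (x, j) = sc_pos L B \<omega> (x + j - 2) \<and> sc_moves_right L B \<omega> (x + j - 2)"
    by (rule disc_out_right_antidiagonal) (use assms True in simp_all)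
  then show ?thesis
    using True by (auto simp: sc_right_edge_iff_disc_out_right)
qed (simp add: sc_right_edge_iff_disc_out_right)

lemma sc_pos_eq_move_counts:
  "sc_pos L B \<omega> t = (1 + (\<Sum>s<t. of_bool (sc_moves_right L B \<omega> s)),
                      1 + (\<Sum>s<t. of_bool (\<not> sc_moves_right L B \<omega> s)))"
  by (induction t) (simp_all add: sc_pos_Suc)

text \<open>Every maximal run of \<open>True\<close> other than the first one is preceded by a \<open>False\<close>.\<close>
lemma sum_of_bool_le_runs:
  fixes m :: "nat \<Rightarrow> bool"
  shows "(\<Sum>s\<le>t. of_bool (m s)) \<le>
    (\<Sum>s<t. of_bool (m s \<and> m (Suc s))) + (\<Sum>s<t. of_bool (\<not> m s)) + (1 :: nat)"
proof (induction t)
  case (Suc t)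
  then show ?case by (cases "m t"; cases "m (Suc t)") (simp_all del: sum_of_bool_eq)
qed (simp del: sum_of_bool_eq)

definition sc_active_count :: "(nat \<Rightarrow> bool) \<Rightarrow> (nat \<Rightarrow> bool) \<Rightarrow> (nat \<times> nat \<Rightarrow> bool \<times> bool)
    \<Rightarrow> nat \<Rightarrow> nat" where
  "sc_active_count L B \<omega> T = (\<Sum>s<T. of_bool (coin_active (\<omega> (sc_pos L B \<omega> s))))"

lemma sc_active_count_mono: "S \<le> T \<Longrightarrow> sc_active_count L B \<omega> S \<le> sc_active_count L B \<omega> T"
  unfolding sc_active_count_def by (rule sum_mono2) auto

lemma sc_straight_right_coin_active:
  assumes "\<not> B 1" and "sc_moves_right L B \<omega> s" and "sc_moves_right L B \<omega> (Suc s)"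
  shows "coin_active (\<omega> (sc_pos L B \<omega> (Suc s)))"
proof -
  obtain i j where pos: "sc_pos L B \<omega> s = (i, j)" by (cases "sc_pos L B \<omega> s")
  then have pos_Suc: "sc_pos L B \<omega> (Suc s) = (i + 1, j)" and ij: "i + j = s + 2" "1 \<le> i" "1 \<le> j"
    using assms(2) sc_pos_antidiagonal[OF pos] by (simp_all add: sc_pos_Suc)
  have left: "disc_in_left L B \<omega> (i + 1) j"
    using pos assms(2) ij by (simp add: disc_in_left_iff sc_moves_right_def)
  moreover have "\<not> disc_in_below L B \<omega> (i + 1) j"
    using disc_in_antidiagonal[of B "i + 1" j "Suc s" L \<omega>] assms(1) left ij pos_Suc by simp
  moreover have "disc_out_right L B \<omega> (i + 1) j"
    using assms(3) pos_Suc by (simp add: sc_moves_right_def)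
  ultimately show ?thesis
    using disc_straight_right_coin_active pos_Suc by metis
qed

text \<open>To cross column \<open>x\<close> at height \<open>j\<close> the particle makes \<open>x\<close> right steps and only
  \<open>j - 1\<close> up steps, so at least \<open>x - j\<close> of its steps are straight right steps, each of
  which needs an active coin.\<close>
lemma sc_right_edge_active_count:
  assumes "\<not> B 1" and "1 \<le> x" and "sc_right_edge L B \<omega> x j"
  shows "x \<le> j + sc_active_count L B \<omega> (x + j - 1)"
proof -
  define t where "t = x + j - 2"
  let ?m = "sc_moves_right L B \<omega>"
  have j: "1 \<le> j" and pos: "sc_pos L B \<omega> t = (x, j)" and mv: "?m t"
    using sc_right_edge_iff_sc_pos[of B x] assms by (auto simp: t_def)
  have "x = (\<Sum>s\<le>t. of_bool (?m s))" and "j = 1 + (\<Sum>s<t. of_bool (\<not> ?m s))"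
    using pos mv sc_pos_eq_move_counts[of L B \<omega> t] by (simp_all add: lessThan_Suc_atMost[symmetric])
  then have "x \<le> (\<Sum>s<t. of_bool (?m s \<and> ?m (Suc s))) + j"
    using sum_of_bool_le_runs[of ?m t] by simp
  also have "(\<Sum>s<t. of_bool (?m s \<and> ?m (Suc s))) \<le>
      (\<Sum>s<t. of_bool (coin_active (\<omega> (sc_pos L B \<omega> (Suc s)))) :: nat)"
    using sc_straight_right_coin_active[of B L \<omega>] assms(1) by (intro sum_mono) auto
  also have "\<dots> \<le> sc_active_count L B \<omega> (Suc t)"
    unfolding sc_active_count_def sum.lessThan_Suc_shift by simp
  also have "Suc t = x + j - 1"
    using assms(2) j by (simp add: t_def)
  finally show ?thesis by simp
qed

section \<open>Coordinates read along a predictable path\<close>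

lemma measurable_PiM_pmf_finite_dependence:
  fixes f :: "('i \<Rightarrow> 'a::finite) \<Rightarrow> 'b" and p :: "'a pmf"
  assumes "finite J" and "\<And>\<omega> \<omega>'. (\<forall>i\<in>J. \<omega> i = \<omega>' i) \<Longrightarrow> f \<omega> = f \<omega>'"
    and "\<And>\<omega>. f \<omega> \<in> space N"
  shows "f \<in> measurable (PiM UNIV (\<lambda>_. measure_pmf p)) N"
proof -
  let ?P = "PiM UNIV (\<lambda>_. measure_pmf p)"
  let ?A = "PiE J (\<lambda>_. UNIV :: 'a set)"
  have fin: "finite ?A" using assms(1) by (intro finite_PiE) auto
  have "(\<lambda>\<omega>. restrict \<omega> J) \<in> measurable ?P (count_space ?A)"
    unfolding measurable_count_space_eq2[OF fin]
  proof safe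
    fix a assume a: "a \<in> ?A"
    have "(\<lambda>\<omega>. restrict \<omega> J) -` {a} \<inter> space ?P = {\<omega> \<in> space ?P. \<forall>i\<in>J. \<omega> i = a i}"
      using a by (auto simp: restrict_def PiE_def extensional_def fun_eq_iff)
    also have "\<dots> \<in> sets ?P"
      by (intro sets.sets_Collect_finite_All[OF _ assms(1)] sets_Collect_single) simp_all
    finally show "(\<lambda>\<omega>. restrict \<omega> J) -` {a} \<inter> space ?P \<in> sets ?P" .
  qed auto
  moreover have "f \<in> measurable (count_space ?A) N"
    using assms(3) by auto
  ultimately have "(\<lambda>\<omega>. f (restrict \<omega> J)) \<in> measurable ?P N"
    by (rule measurable_compose)
  moreover have "f (restrict \<omega> J) = f \<omega>" for \<omega>
    by (rule assms(2)) simp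
  ultimately show ?thesis by simp
qed

lemma nn_integral_PiM_pmf_split_coordinate:
  fixes f :: "('i \<Rightarrow> 'a) \<Rightarrow> ennreal" and p :: "'a pmf"
  assumes f: "f \<in> borel_measurable (PiM UNIV (\<lambda>_. measure_pmf p))"
  shows "(\<integral>\<^sup>+\<omega>. f \<omega> \<partial>PiM UNIV (\<lambda>_. measure_pmf p))
       = (\<integral>\<^sup>+x. \<integral>\<^sup>+X. f (X(v := x)) \<partial>PiM (UNIV - {v}) (\<lambda>_. measure_pmf p) \<partial>measure_pmf p)"
proof -
  let ?M = "\<lambda>_::'i. measure_pmf p"
  let ?T = "\<lambda>(x, X). (X :: 'i \<Rightarrow> 'a)(v := x)"
  interpret prob_space "PiM (UNIV - {v}) ?M"
    by (intro prob_space_PiM) (simp add: prob_space_measure_pmf)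
  have T: "?T \<in> measurable (measure_pmf p \<Otimes>\<^sub>M PiM (UNIV - {v}) ?M) (PiM UNIV ?M)"
    unfolding case_prod_beta' by (rule measurable_fun_upd[where J = "UNIV - {v}"]) auto
  have D: "distr (measure_pmf p \<Otimes>\<^sub>M PiM (UNIV - {v}) ?M) (PiM UNIV ?M) ?T = PiM UNIV ?M"
    using distr_pair_PiM_eq_PiM[of "UNIV - {v}" ?M v] by (simp add: insert_absorb prob_space_measure_pmf)
  have "(\<integral>\<^sup>+\<omega>. f \<omega> \<partial>PiM UNIV ?M)
      = (\<integral>\<^sup>+y. f (?T y) \<partial>(measure_pmf p \<Otimes>\<^sub>M PiM (UNIV - {v}) ?M))"
    by (subst D[symmetric], subst nn_integral_distr[OF T]) (use f D in simp_all)
  also have "\<dots> = (\<integral>\<^sup>+x. \<integral>\<^sup>+X. f (X(v := x)) \<partial>PiM (UNIV - {v}) ?M \<partial>measure_pmf p)"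
    using measurable_compose[OF T f] by (subst nn_integral_fst[symmetric]) (simp_all add: case_prod_beta')
  finally show ?thesis .
qed

lemma nn_integral_PiM_pmf_mult_coordinate:
  fixes g :: "('i \<Rightarrow> 'a) \<Rightarrow> ennreal" and p :: "'a pmf" and h :: "'a \<Rightarrow> ennreal"
  assumes g: "g \<in> borel_measurable (PiM UNIV (\<lambda>_. measure_pmf p))"
    and g_indep: "\<And>\<omega> y. g (\<omega> (v := y)) = g \<omega>"
  shows "(\<integral>\<^sup>+\<omega>. g \<omega> * h (\<omega> v) \<partial>PiM UNIV (\<lambda>_. measure_pmf p))
       = (\<integral>\<^sup>+\<omega>. g \<omega> \<partial>PiM UNIV (\<lambda>_. measure_pmf p)) * (\<integral>\<^sup>+c. h c \<partial>measure_pmf p)"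
proof -
  let ?M = "\<lambda>_::'i. measure_pmf p"
  have g': "g \<in> borel_measurable (PiM (UNIV - {v}) ?M)" (is "_ \<in> borel_measurable ?N")
  proof -
    have "(\<lambda>X. X(v := undefined)) \<in> measurable ?N (PiM UNIV ?M)"
      by (rule measurable_fun_upd[where J = "UNIV - {v}"]) auto
    then have "(\<lambda>X. g (X(v := undefined))) \<in> borel_measurable ?N"
      using g by (rule measurable_compose)
    then show ?thesis by (simp add: g_indep)
  qed
  have split: "(\<integral>\<^sup>+\<omega>. g \<omega> * h (\<omega> v) \<partial>PiM UNIV ?M) = (\<integral>\<^sup>+\<omega>. g \<omega> \<partial>?N) * (\<integral>\<^sup>+c. h c \<partial>measure_pmf p)"
    for h :: "'a \<Rightarrow> ennreal"
  proof -
    have "(\<lambda>\<omega>. h (\<omega> v)) \<in> borel_measurable (PiM UNIV ?M)"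
      by (intro measurable_compose[OF measurable_component_singleton]) simp_all
    then have "(\<integral>\<^sup>+\<omega>. g \<omega> * h (\<omega> v) \<partial>PiM UNIV ?M) = (\<integral>\<^sup>+x. \<integral>\<^sup>+X. g X * h x \<partial>?N \<partial>measure_pmf p)"
      using g by (subst nn_integral_PiM_pmf_split_coordinate[where v = v]) (simp_all add: g_indep)
    also have "\<dots> = (\<integral>\<^sup>+x. (\<integral>\<^sup>+X. g X \<partial>?N) * h x \<partial>measure_pmf p)"
      using g' by (simp add: nn_integral_multc)
    also have "\<dots> = (\<integral>\<^sup>+\<omega>. g \<omega> \<partial>?N) * (\<integral>\<^sup>+c. h c \<partial>measure_pmf p)"
      by (simp add: nn_integral_cmult)
    finally show ?thesis .
  qed
  show ?thesis
    using split[of h] split[of "\<lambda>_. 1"] by (simp add: measure_pmf.emeasure_space_1)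
qed

lemma finite_range_finite_dependence:
  fixes f :: "('i \<Rightarrow> 'a::finite) \<Rightarrow> 'b"
  assumes "finite J" and "\<And>\<omega> \<omega>'. (\<forall>i\<in>J. \<omega> i = \<omega>' i) \<Longrightarrow> f \<omega> = f \<omega>'"
  shows "finite (range f)"
proof (rule finite_subset)
  show "range f \<subseteq> f ` PiE J (\<lambda>_. UNIV)"
  proof safe
    fix \<omega>
    have "f \<omega> = f (restrict \<omega> J)" by (rule assms(2)) simp
    then show "f \<omega> \<in> f ` PiE J (\<lambda>_. UNIV)" by auto
  qed
  show "finite (f ` PiE J (\<lambda>_. UNIV))"
    using assms(1) by (intro finite_imageI finite_PiE) auto
qed

text \<open>\<open>F t\<close> is the set of coordinates revealed before step \<open>t\<close>; it determines which coordinate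
  is read at step \<open>t\<close>, and that coordinate has not been revealed yet.\<close>
locale predictable_path =
  fixes pos :: "nat \<Rightarrow> ('i \<Rightarrow> 'a::finite) \<Rightarrow> 'i" and F :: "nat \<Rightarrow> 'i set"
  assumes finite_F: "finite (F t)" and F_mono: "s \<le> t \<Longrightarrow> F s \<subseteq> F t"
    and pos_local: "(\<forall>i\<in>F t. \<omega> i = \<omega>' i) \<Longrightarrow> pos t \<omega> = pos t \<omega>'"
    and pos_fresh: "pos t \<omega> \<notin> F t"
    and pos_revealed: "pos t \<omega> \<in> F (Suc t)"
begin

lemma prod_local:
  assumes "\<forall>i\<in>F T. \<omega> i = \<omega>' i"
  shows "(\<Prod>s<T. h (\<omega> (pos s \<omega>))) = (\<Prod>s<T. h (\<omega>' (pos s \<omega>')))"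
proof (rule prod.cong)
  fix s assume "s \<in> {..<T}"
  then have "pos s \<omega> = pos s \<omega>'" and "pos s \<omega> \<in> F T"
    using assms pos_local[of s \<omega> \<omega>'] F_mono[of s T] pos_revealed[of s \<omega>] F_mono[of "Suc s" T] by auto
  then show "h (\<omega> (pos s \<omega>)) = h (\<omega>' (pos s \<omega>'))"
    using assms by simp
qed simp

lemma nn_integral_prod:
  fixes h :: "'a \<Rightarrow> ennreal" and p :: "'a pmf"
  shows "(\<integral>\<^sup>+\<omega>. (\<Prod>s<T. h (\<omega> (pos s \<omega>))) \<partial>PiM UNIV (\<lambda>_. measure_pmf p)) = (\<integral>\<^sup>+c. h c \<partial>p) ^ T"
proof (induction T)
  case 0
  interpret prob_space "PiM UNIV (\<lambda>_. measure_pmf p)"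
    by (intro prob_space_PiM) (simp add: prob_space_measure_pmf)
  show ?case by (simp add: emeasure_space_1)
next
  case (Suc T)
  let ?M = "PiM UNIV (\<lambda>_. measure_pmf p)"
  define G where "G v \<omega> = (if pos T \<omega> = v then \<Prod>s<T. h (\<omega> (pos s \<omega>)) else 0)" for v \<omega>
  have G_local: "G v \<omega> = G v \<omega>'" if "\<forall>i\<in>F T. \<omega> i = \<omega>' i" for v \<omega> \<omega>'
    using that pos_local[of T \<omega> \<omega>'] prod_local[of T \<omega> \<omega>' h] by (simp add: G_def)
  have G_meas: "G v \<in> borel_measurable ?M" for v
    by (rule measurable_PiM_pmf_finite_dependence[OF finite_F G_local]) auto
  have "G v (\<omega> (v := y)) = G v \<omega>" for v \<omega> y
  proof (cases "v \<in> F T")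
    case True
    then show ?thesis using pos_fresh[of T] by (metis G_def)
  next
    case False
    then show ?thesis by (intro G_local) auto
  qed
  then have step: "(\<integral>\<^sup>+\<omega>. G v \<omega> * h (\<omega> v) \<partial>?M) = (\<integral>\<^sup>+\<omega>. G v \<omega> \<partial>?M) * (\<integral>\<^sup>+c. h c \<partial>p)" for v
    by (intro nn_integral_PiM_pmf_mult_coordinate G_meas)
  define D where "D = range (pos T)"
  have "finite D"
    unfolding D_def using finite_F pos_local by (rule finite_range_finite_dependence)
  have "(\<Prod>s<Suc T. h (\<omega> (pos s \<omega>))) = (\<Sum>v\<in>D. G v \<omega> * h (\<omega> v))" for \<omega>
  proof -
    have "G v \<omega> * h (\<omega> v) = (if pos T \<omega> = v then (\<Prod>s<T. h (\<omega> (pos s \<omega>))) * h (\<omega> v) else 0)" for v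
      by (simp add: G_def)
    then show ?thesis using \<open>finite D\<close> by (simp add: D_def sum.delta' mult.commute)
  qed
  then have "(\<integral>\<^sup>+\<omega>. (\<Prod>s<Suc T. h (\<omega> (pos s \<omega>))) \<partial>?M) = (\<Sum>v\<in>D. \<integral>\<^sup>+\<omega>. G v \<omega> * h (\<omega> v) \<partial>?M)"
    using G_meas by (simp add: nn_integral_sum)
  also have "\<dots> = (\<integral>\<^sup>+\<omega>. (\<Sum>v\<in>D. G v \<omega>) \<partial>?M) * (\<integral>\<^sup>+c. h c \<partial>p)"
    using G_meas by (simp add: step nn_integral_sum sum_distrib_right)
  also have "(\<lambda>\<omega>. \<Sum>v\<in>D. G v \<omega>) = (\<lambda>\<omega>. \<Prod>s<T. h (\<omega> (pos s \<omega>)))"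
    using \<open>finite D\<close> by (simp add: G_def D_def sum.delta')
  finally show ?case by (simp add: Suc.IH mult.commute)
qed

end

section \<open>Exponential moment of the number of active coins\<close>

lemma sc_pos_local:
  assumes "\<And>a b. a + b \<le> t + 1 \<Longrightarrow> \<omega> (a, b) = \<omega>' (a, b)"
  shows "sc_pos L B \<omega> t = sc_pos L B \<omega>' t"
  using assms
proof (induction t)
  case (Suc t)
  obtain i j where pos: "sc_pos L B \<omega> t = (i, j)" by (cases "sc_pos L B \<omega> t")
  have pos': "sc_pos L B \<omega>' t = (i, j)"
    using Suc pos by simp
  have "\<omega> (a, b) = \<omega>' (a, b)" if "a \<le> i" "b \<le> j" for a b
    using Suc.prems that sc_pos_antidiagonal[OF pos] by simp
  then have "disc_out_right L B \<omega> i j = disc_out_right L B \<omega>' i j"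
    unfolding disc_out_right_def by (metis s6v_out_local)
  then show ?case by (simp add: sc_pos_Suc sc_moves_right_def pos pos')
qed simp

lemma sc_active_count_local:
  assumes "\<And>a b. a + b \<le> T + 1 \<Longrightarrow> \<omega> (a, b) = \<omega>' (a, b)"
  shows "sc_active_count L B \<omega> T = sc_active_count L B \<omega>' T"
  unfolding sc_active_count_def
proof (rule sum.cong)
  fix s assume "s \<in> {..<T}"
  obtain a b where pos: "sc_pos L B \<omega> s = (a, b)" by (cases "sc_pos L B \<omega> s")
  have "sc_pos L B \<omega> s = sc_pos L B \<omega>' s"
    using \<open>s \<in> {..<T}\<close> assms by (intro sc_pos_local) simp
  then have "sc_pos L B \<omega>' s = (a, b)"
    using pos by simp
  moreover have "\<omega> (a, b) = \<omega>' (a, b)"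
    using \<open>s \<in> {..<T}\<close> assms sc_pos_antidiagonal[OF pos] by simp
  ultimately show "of_bool (coin_active (\<omega> (sc_pos L B \<omega> s))) = of_bool (coin_active (\<omega>' (sc_pos L B \<omega>' s)))"
    using pos by simp
qed simp

lemma finite_antidiagonal_le: "finite {(a, b). a + b \<le> (n :: nat)}"
  by (rule finite_subset[of _ "{..n} \<times> {..n}"]) auto

lemma prob_space_s6v_space: "prob_space (s6v_space d1 d2)"
  unfolding s6v_space_def by (intro prob_space_PiM) (simp add: prob_space_measure_pmf)

lemma sc_active_count_measurable:
  "(\<lambda>\<omega>. sc_active_count L B \<omega> T) \<in> measurable (s6v_space d1 d2) (count_space UNIV)"
  unfolding s6v_space_def
  using finite_antidiagonal_le sc_active_count_local
  by (rule measurable_PiM_pmf_finite_dependence) auto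

lemma sc_pos_predictable:
  "predictable_path (\<lambda>t \<omega>. sc_pos L B \<omega> t) (\<lambda>t. {(a, b). a + b \<le> t + 1})"
proof
  show "sc_pos L B \<omega> t = sc_pos L B \<omega>' t" if "\<forall>i\<in>{(a, b). a + b \<le> t + 1}. \<omega> i = \<omega>' i" for t \<omega> \<omega>'
    using that by (intro sc_pos_local) auto
qed (use finite_antidiagonal_le sc_pos_antidiagonal in \<open>auto split: prod.splits\<close>)

lemma sc_active_count_exp_moment:
  "(\<integral>\<^sup>+\<omega>. ennreal (exp (s * real (sc_active_count L B \<omega> T))) \<partial>PiM UNIV (\<lambda>_. measure_pmf p))
     = (\<integral>\<^sup>+c. ennreal (exp (s * of_bool (coin_active c))) \<partial>p) ^ T"
proof -
  have "ennreal (exp (s * real (sc_active_count L B \<omega> T)))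
      = (\<Prod>t<T. ennreal (exp (s * of_bool (coin_active (\<omega> (sc_pos L B \<omega> t))))))" for \<omega>
  proof -
    have "real (sc_active_count L B \<omega> T) = (\<Sum>t<T. of_bool (coin_active (\<omega> (sc_pos L B \<omega> t))))"
      unfolding sc_active_count_def of_nat_sum by simp
    then have "exp (s * real (sc_active_count L B \<omega> T))
        = (\<Prod>t<T. exp (s * of_bool (coin_active (\<omega> (sc_pos L B \<omega> t)))))"
      by (simp only: sum_distrib_left exp_sum[OF finite_lessThan])
    then show ?thesis
      by (simp only: prod_ennreal[symmetric] exp_ge_zero)
  qed
  moreover have "(\<integral>\<^sup>+\<omega>. (\<Prod>t<T. ennreal (exp (s * of_bool (coin_active (\<omega> (sc_pos L B \<omega> t))))))
      \<partial>PiM UNIV (\<lambda>_. measure_pmf p)) = (\<integral>\<^sup>+c. ennreal (exp (s * of_bool (coin_active c))) \<partial>p) ^ T"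
    by (rule predictable_path.nn_integral_prod[OF sc_pos_predictable])
  ultimately show ?thesis by simp
qed

lemma coin_active_exp_moment_le:
  fixes d1 d2 :: real
  assumes "0 \<le> d2" and "d2 \<le> d1" and "d1 \<le> 1"
  shows "(\<integral>\<^sup>+c. ennreal (exp (of_bool (coin_active c))) \<partial>pair_pmf (bernoulli_pmf d1) (bernoulli_pmf d2))
       \<le> ennreal (1 + 2 * (exp 1 - 1) * d1)"
proof -
  let ?p = "pair_pmf (bernoulli_pmf d1) (bernoulli_pmf d2)"
  have UNIV: "(UNIV :: (bool \<times> bool) set) = {(True, True), (True, False), (False, True), (False, False)}"
    by auto
  have "(\<integral>\<^sup>+c. ennreal (exp (of_bool (coin_active c))) \<partial>?p)
      = (\<Sum>c\<in>UNIV. ennreal (exp (of_bool (coin_active c))) * pmf ?p c)"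
    by (rule nn_integral_measure_pmf_support) auto
  also have "\<dots> = ennreal (1 + (exp 1 - 1) * (d1 + d2 - d1 * d2))"
    using assms
    by (simp add: UNIV coin_active_def pmf_pair ennreal_mult[symmetric] ennreal_plus[symmetric]
        algebra_simps del: ennreal_plus)
  also have "\<dots> \<le> ennreal (1 + (exp 1 - 1) * (2 * d1))"
  proof (intro ennreal_leI add_left_mono mult_left_mono)
    show "d1 + d2 - d1 * d2 \<le> 2 * d1"
      using assms mult_nonneg_nonneg[of d1 d2] by linarith
  qed simp
  also have "\<dots> = ennreal (1 + 2 * (exp 1 - 1) * d1)"
    by (simp add: algebra_simps)
  finally show ?thesis .
qed

lemma sc_active_count_tail:
  fixes d1 d2 k :: real
  assumes "0 \<le> d2" and "d2 \<le> d1" and "d1 \<le> 1"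
  shows "measure (s6v_space d1 d2) {\<omega> \<in> space (s6v_space d1 d2). k \<le> real (sc_active_count L B \<omega> T)}
           \<le> exp (- k) * (1 + 2 * (exp 1 - 1) * d1) ^ T"
proof -
  let ?M = "s6v_space d1 d2"
  let ?Y = "\<lambda>\<omega>. real (sc_active_count L B \<omega> T)"
  let ?q = "1 + 2 * (exp 1 - 1) * d1"
  interpret prob_space ?M
    by (rule prob_space_s6v_space)
  have Y: "?Y \<in> borel_measurable ?M"
    using sc_active_count_measurable by (rule measurable_compose) simp
  have "(\<integral>\<^sup>+\<omega>. ennreal (exp (1 * ?Y \<omega>)) * indicator (space ?M) \<omega> \<partial>?M)
      = (\<integral>\<^sup>+c. ennreal (exp (of_bool (coin_active c))) \<partial>pair_pmf (bernoulli_pmf d1) (bernoulli_pmf d2)) ^ T"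
    using sc_active_count_exp_moment[where s = 1] unfolding s6v_space_def
    by (subst nn_integral_cong[where v = "\<lambda>\<omega>. ennreal (exp (?Y \<omega>))"]) simp_all
  also have "\<dots> \<le> ennreal ?q ^ T"
    using coin_active_exp_moment_le[OF assms] by (rule power_mono) simp
  also have "\<dots> = ennreal (?q ^ T)"
    using assms by (intro ennreal_power) simp
  finally have moment: "(\<integral>\<^sup>+\<omega>. ennreal (exp (1 * ?Y \<omega>)) * indicator (space ?M) \<omega> \<partial>?M) \<le> ennreal (?q ^ T)" .
  have "emeasure ?M {\<omega> \<in> space ?M. k \<le> ?Y \<omega>}
      \<le> ennreal (exp (- 1 * k)) * (\<integral>\<^sup>+\<omega>. ennreal (exp (1 * ?Y \<omega>)) * indicator (space ?M) \<omega> \<partial>?M)"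
    using Y by (intro Chernoff_ineq_nn_integral_ge) auto
  also have "\<dots> \<le> ennreal (exp (- k)) * ennreal (?q ^ T)"
    using moment by (simp add: mult_left_mono)
  also have "\<dots> = ennreal (exp (- k) * ?q ^ T)"
    using assms by (intro ennreal_mult[symmetric]) simp_all
  finally have "emeasure ?M {\<omega> \<in> space ?M. k \<le> ?Y \<omega>} \<le> ennreal (exp (- k) * ?q ^ T)" .
  then show ?thesis
    using assms by (simp add: emeasure_eq_measure ennreal_le_iff)
qed

lemma exp_neg_mult_moment_bound_le:
  fixes d1 k :: real
  assumes "0 \<le> d1" and "100 * real x * d1 \<le> k"
  shows "exp (- k) * (1 + 2 * (exp 1 - 1) * d1) ^ (2 * x) \<le> exp (- (1 / 2) * k)"
proof -
  have "(1 + 2 * (exp 1 - 1) * d1) ^ (2 * x) \<le> exp (2 * (exp 1 - 1) * d1) ^ (2 * x)"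
    using assms(1) by (intro power_mono exp_ge_add_one_self) simp
  also have "\<dots> = exp (4 * (exp 1 - 1) * (real x * d1))"
    by (simp add: algebra_simps flip: exp_of_nat_mult)
  also have "\<dots> \<le> exp (k / 2)"
  proof -
    have "4 * (exp 1 - 1) \<le> (50 :: real)"
      using e_less_272 by simp
    then have "4 * (exp 1 - 1) * (real x * d1) \<le> 50 * (real x * d1)"
      using assms(1) by (intro mult_right_mono) simp_all
    then show ?thesis using assms(2) by simp
  qed
  finally have "exp (- k) * (1 + 2 * (exp 1 - 1) * d1) ^ (2 * x) \<le> exp (- k) * exp (k / 2)"
    by simp
  also have "\<dots> = exp (- (1 / 2) * k)"
    by (simp flip: exp_add)
  finally show ?thesis .
qed

lemma sc_low_crossing_prob_le:
  fixes d1 d2 k :: real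
  assumes d: "0 \<le> d2" "d2 \<le> d1" "d1 \<le> 1" and "\<not> B 1" and "1 \<le> x" and "0 < k"
    and "100 * real x * d1 \<le> k"
  shows "measure (s6v_space d1 d2)
      {\<omega> \<in> space (s6v_space d1 d2). \<exists>j. sc_right_edge L B \<omega> x j \<and> real j \<le> real x - k}
    \<le> exp (- (1 / 2) * k)"
proof -
  let ?M = "s6v_space d1 d2"
  interpret prob_space ?M
    by (rule prob_space_s6v_space)
  define S where "S = {\<omega> \<in> space ?M. k \<le> real (sc_active_count L B \<omega> (2 * x))}"
  define E where "E = {\<omega> \<in> space ?M. \<exists>j. sc_right_edge L B \<omega> x j \<and> real j \<le> real x - k}"
  have "E \<subseteq> S"
  proof (unfold E_def, safe)
    fix \<omega> j assume \<omega>: "\<omega> \<in> space ?M" and edge: "sc_right_edge L B \<omega> x j" and j: "real j \<le> real x - k"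
    have "x \<le> j + sc_active_count L B \<omega> (x + j - 1)"
      using sc_right_edge_active_count assms(4,5) edge by blast
    also have "\<dots> \<le> j + sc_active_count L B \<omega> (2 * x)"
      using j \<open>0 < k\<close> by (intro add_left_mono sc_active_count_mono) simp
    finally show "\<omega> \<in> S"
      using \<omega> j by (simp add: S_def)
  qed
  moreover have "S \<in> sets ?M"
    unfolding S_def using sc_active_count_measurable by measurable
  ultimately have "measure ?M E \<le> measure ?M S"
    by (cases "E \<in> sets ?M") (auto intro: finite_measure_mono simp: measure_notin_sets)
  also have "\<dots> \<le> exp (- k) * (1 + 2 * (exp 1 - 1) * d1) ^ (2 * x)"
    unfolding S_def using d by (rule sc_active_count_tail)
  also have "\<dots> \<le> exp (- (1 / 2) * k)"
    using d assms(7) by (intro exp_neg_mult_moment_bound_le) simp_all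
  finally show ?thesis
    unfolding E_def .
qed

theorem proposition5p8:
  fixes d1 d2 :: real
  assumes "0 < d2" and "d2 < d1" and "d1 < 1"
  shows "\<exists>C c. C > 0 \<and> c > 0 \<and>
    (\<forall>(L :: nat \<Rightarrow> bool) (B :: nat \<Rightarrow> bool) (x :: nat) (k :: real).
       \<not> B 1 \<and> x > 10 \<and> k \<ge> 100 * real x * d1 \<longrightarrow>
       measure (s6v_space d1 d2)
         {\<omega> \<in> space (s6v_space d1 d2). \<exists>j. sc_right_edge L B \<omega> x j \<and> real j \<le> real x - k}
       \<le> C * exp (- c * k))"
proof -
  have "measure (s6v_space d1 d2)
      {\<omega> \<in> space (s6v_space d1 d2). \<exists>j. sc_right_edge L B \<omega> x j \<and> real j \<le> real x - k}
    \<le> exp (- (1 / 2) * k)"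
    if hyp: "\<not> B 1 \<and> x > 10 \<and> k \<ge> 100 * real x * d1" for L B :: "nat \<Rightarrow> bool" and x :: nat and k :: real
  proof (rule sc_low_crossing_prob_le)
    have "0 < 100 * real x * d1"
      using hyp assms by simp
    then show "0 < k"
      using hyp by linarith
  qed (use hyp assms in auto)
  then show ?thesis
    by (intro exI[of _ 1] exI[of _ "1 / 2"]) auto
qed

end
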